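(* If $G$ is a $K_t$-minor-free graph of diameter $d$ and order $n$, with a resolving set of size $k$, then $n\leq (dk+1)^{t-1}+1$.
   Context: A set $R$ of vertices of a graph $G$ is a resolving set if for each pair $u,v$ of distinct vertices there is $x\in R$ with $d(x,u)\neq d(x,v)$. A graph is $K_t$-minor-free if the complete graph $K_t$ is not a minor of it. *)

theory Defs
  imports Main
begin

definition simple_graph :: "'a set \<Rightarrow> ('a \<Rightarrow> 'a \<Rightarrow> bool) \<Rightarrow> bool" where
  "simple_graph V E \<longleftrightarrow> finite V \<and> (\<forall>x y. E x y \<longrightarrow> x \<in> V \<and> y \<in> V)
     \<and> (\<forall>x y. E x y \<longrightarrow> E y x) \<and> (\<forall>x. \<not> E x x)"

definition walk_in :: "'a set \<Rightarrow> ('a \<Rightarrow> 'a \<Rightarrow> bool) \<Rightarrow> 'a list \<Rightarrow> bool" where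
  "walk_in S E xs \<longleftrightarrow> xs \<noteq> [] \<and> set xs \<subseteq> S
     \<and> (\<forall>i. Suc i < length xs \<longrightarrow> E (xs ! i) (xs ! Suc i))"

definition connected_in :: "'a set \<Rightarrow> ('a \<Rightarrow> 'a \<Rightarrow> bool) \<Rightarrow> bool" where
  "connected_in S E \<longleftrightarrow> (\<forall>u\<in>S. \<forall>v\<in>S. \<exists>xs. walk_in S E xs \<and> hd xs = u \<and> last xs = v)"

definition gdist :: "'a set \<Rightarrow> ('a \<Rightarrow> 'a \<Rightarrow> bool) \<Rightarrow> 'a \<Rightarrow> 'a \<Rightarrow> nat" where
  "gdist V E u v = (LEAST l. \<exists>xs. walk_in V E xs \<and> hd xs = u \<and> last xs = v \<and> length xs = Suc l)"

definition diameter :: "'a set \<Rightarrow> ('a \<Rightarrow> 'a \<Rightarrow> bool) \<Rightarrow> nat" where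
  "diameter V E = Max {gdist V E u v | u v. u \<in> V \<and> v \<in> V}"

definition resolving_set :: "'a set \<Rightarrow> ('a \<Rightarrow> 'a \<Rightarrow> bool) \<Rightarrow> 'a set \<Rightarrow> bool" where
  "resolving_set V E R \<longleftrightarrow> R \<subseteq> V \<and>
     (\<forall>u\<in>V. \<forall>v\<in>V. u \<noteq> v \<longrightarrow> (\<exists>x\<in>R. gdist V E x u \<noteq> gdist V E x v))"

definition has_complete_minor :: "'a set \<Rightarrow> ('a \<Rightarrow> 'a \<Rightarrow> bool) \<Rightarrow> nat \<Rightarrow> bool" where
  "has_complete_minor V E t \<longleftrightarrow> (\<exists>B :: nat \<Rightarrow> 'a set.
     (\<forall>i<t. B i \<noteq> {} \<and> B i \<subseteq> V \<and> connected_in (B i) E) \<and>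
     (\<forall>i<t. \<forall>j<t. i \<noteq> j \<longrightarrow> B i \<inter> B j = {} \<and> (\<exists>x\<in>B i. \<exists>y\<in>B j. E x y)))"

end

theory Submission
  imports Defs
begin

(*
  Send a vertex w to the set of pairs (c, \<rho>) \<in> R \<times> {0..<d} with d(c, w) \<le> \<rho>, i.e. to the set of
  balls of radius below the diameter around resolving vertices that contain w. As R is resolving,
  this map is injective, so the n vertices give n distinct traces on a ground set of size d k.

  The trace family cannot shatter t balls B(x_1, r_1), ..., B(x_t, r_t). Otherwise, for i \<noteq> j pick
  a vertex w lying in exactly the balls i and j and join x_i to x_j by a shortest walk through w.
  Along this walk ball i or ball j has the largest slack r_l - d(x_l, z), and the difference of
  these two slacks is monotone. Giving every vertex of these walks to the ball of largest slack
  (ties to the smaller index) therefore yields connected, pairwise adjacent branch sets of a K_t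
  minor. The Sauer-Shelah bound for families of VC dimension below t gives n \<le> (d k + 1)^(t-1).
*)

section \<open>Walks and graph distance\<close>

lemma walk_in_append:
  assumes "walk_in S E xs" "walk_in S E ys" "last xs = hd ys"
  shows "walk_in S E (xs @ tl ys)"
proof -
  have xs: "xs \<noteq> []" "set xs \<subseteq> S" "\<And>i. Suc i < length xs \<Longrightarrow> E (xs ! i) (xs ! Suc i)"
    using assms(1) unfolding walk_in_def by auto
  have ys: "ys \<noteq> []" "set ys \<subseteq> S" "\<And>i. Suc i < length ys \<Longrightarrow> E (ys ! i) (ys ! Suc i)"
    using assms(2) unfolding walk_in_def by auto
  have "E ((xs @ tl ys) ! i) ((xs @ tl ys) ! Suc i)" if i: "Suc i < length (xs @ tl ys)" for i
  proof (cases "Suc i < length xs")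
    case True
    then show ?thesis using xs(3)[of i] by (simp add: nth_append)
  next
    case False
    define m where "m = i + 1 - length xs"
    have "(xs @ tl ys) ! i = ys ! m"
    proof (cases "Suc i = length xs")
      case True
      then have "i = length xs - 1" by simp
      then show ?thesis
        using xs(1) ys(1) assms(3) by (simp add: m_def nth_append last_conv_nth hd_conv_nth)
    next
      case False
      then show ?thesis
        using \<open>\<not> Suc i < length xs\<close> i by (simp add: m_def nth_append nth_tl Suc_diff_le)
    qed
    moreover have "(xs @ tl ys) ! Suc i = ys ! Suc m"
      using False i ys(1) by (auto simp: m_def nth_append nth_tl Suc_diff_le)
    moreover have "Suc m < length ys" using False i by (auto simp: m_def)
    ultimately show ?thesis using ys(3) by simp
  qed
  moreover have "set (tl ys) \<subseteq> set ys" by (cases ys) auto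
  ultimately show ?thesis using xs ys unfolding walk_in_def by auto
qed

lemma hd_last_append_tl:
  assumes "xs \<noteq> []" "ys \<noteq> []" "last xs = hd ys"
  shows "hd (xs @ tl ys) = hd xs" "last (xs @ tl ys) = last ys"
proof -
  show "hd (xs @ tl ys) = hd xs" using assms(1) by simp
  obtain y ys' where "ys = y # ys'" using assms(2) by (cases ys) auto
  then show "last (xs @ tl ys) = last ys" using assms(1,3) by (cases "ys' = []") auto
qed

lemma walk_in_rev:
  assumes "walk_in S E xs" "\<And>x y. E x y \<Longrightarrow> E y x"
  shows "walk_in S E (rev xs)"
proof -
  have "E (rev xs ! i) (rev xs ! Suc i)" if "Suc i < length xs" for i
  proof -
    have "E (xs ! (length xs - Suc (Suc i))) (xs ! Suc (length xs - Suc (Suc i)))"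
      using assms(1) that unfolding walk_in_def by simp
    then show ?thesis using assms(2) that by (simp add: rev_nth Suc_diff_Suc)
  qed
  then show ?thesis using assms(1) unfolding walk_in_def by auto
qed

lemma walk_in_take:
  "walk_in S E xs \<Longrightarrow> walk_in S E (take (Suc q) xs)"
  unfolding walk_in_def by (auto dest: in_set_takeD)

lemma walk_in_mono:
  "walk_in S E xs \<Longrightarrow> set xs \<subseteq> T \<Longrightarrow> walk_in T E xs"
  unfolding walk_in_def by blast

lemma connected_in_if_walks_from:
  assumes "c \<in> S" "\<And>x y. E x y \<Longrightarrow> E y x"
    and "\<And>z. z \<in> S \<Longrightarrow> \<exists>xs. walk_in S E xs \<and> hd xs = c \<and> last xs = z"
  shows "connected_in S E"
  unfolding connected_in_def
proof (intro ballI)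
  fix u v assume "u \<in> S" "v \<in> S"
  then obtain xs ys where xs: "walk_in S E xs" "hd xs = c" "last xs = u"
    and ys: "walk_in S E ys" "hd ys = c" "last ys = v"
    using assms(3) by meson
  have ne: "xs \<noteq> []" "ys \<noteq> []" using xs ys unfolding walk_in_def by auto
  have "walk_in S E (rev xs @ tl ys)"
    using walk_in_append[OF walk_in_rev[OF xs(1) assms(2)] ys(1)] xs ys ne by (simp add: last_rev)
  moreover have "hd (rev xs @ tl ys) = u" "last (rev xs @ tl ys) = v"
    using hd_last_append_tl[of "rev xs" ys] xs ys ne by (simp_all add: hd_rev last_rev)
  ultimately show "\<exists>zs. walk_in S E zs \<and> hd zs = u \<and> last zs = v" by blast
qed

lemma exists_nth_switch:
  assumes "xs \<noteq> []" "P (hd xs)" "\<not> P (last xs)"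
  shows "\<exists>q. Suc q < length xs \<and> P (xs ! q) \<and> \<not> P (xs ! Suc q)"
  using assms
proof (induction xs)
  case Nil
  then show ?case by simp
next
  case (Cons a xs)
  then have "xs \<noteq> []" by auto
  show ?case
  proof (cases "P (hd xs)")
    case True
    with Cons.IH \<open>xs \<noteq> []\<close> Cons.prems(3) obtain q where
      "Suc q < length xs" "P (xs ! q)" "\<not> P (xs ! Suc q)" by auto
    then show ?thesis by (intro exI[of _ "Suc q"]) auto
  next
    case False
    then show ?thesis using Cons.prems(2) \<open>xs \<noteq> []\<close>
      by (intro exI[of _ 0]) (auto simp: hd_conv_nth)
  qed
qed

lemma gdist_le_walk:
  assumes "walk_in V E xs"
  shows "gdist V E (hd xs) (last xs) \<le> length xs - 1"
  unfolding gdist_def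
  by (rule Least_le) (use assms in \<open>auto simp: walk_in_def\<close>)

locale connected_graph =
  fixes V :: "'a set" and E :: "'a \<Rightarrow> 'a \<Rightarrow> bool"
  assumes simple: "simple_graph V E" and connected: "connected_in V E"
begin

lemma finite_vertices: "finite V"
  using simple unfolding simple_graph_def by blast

lemma edge_sym: "E x y \<Longrightarrow> E y x"
  using simple unfolding simple_graph_def by blast

lemma shortest_walk:
  assumes "u \<in> V" "v \<in> V"
  obtains xs where "walk_in V E xs" "hd xs = u" "last xs = v" "length xs = Suc (gdist V E u v)"
proof -
  obtain xs where xs: "walk_in V E xs" "hd xs = u" "last xs = v"
    using connected assms unfolding connected_in_def by blast
  then have "xs \<noteq> []" unfolding walk_in_def by auto
  with xs have "\<exists>l ys. walk_in V E ys \<and> hd ys = u \<and> last ys = v \<and> length ys = Suc l"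
    by (intro exI[of _ "length xs - 1"] exI[of _ xs]) auto
  from LeastI_ex[OF this] show ?thesis using that unfolding gdist_def by blast
qed

lemma gdist_self: "u \<in> V \<Longrightarrow> gdist V E u u = 0"
  using gdist_le_walk[of V E "[u]"] unfolding walk_in_def by auto

lemma gdist_commute:
  assumes "u \<in> V" "v \<in> V"
  shows "gdist V E u v = gdist V E v u"
proof -
  have "gdist V E a b \<le> gdist V E b a" if ab: "a \<in> V" "b \<in> V" for a b
  proof -
    obtain xs where xs: "walk_in V E xs" "hd xs = b" "last xs = a" "length xs = Suc (gdist V E b a)"
      using shortest_walk[OF ab(2,1)] .
    then have "xs \<noteq> []" unfolding walk_in_def by auto
    with xs gdist_le_walk[OF walk_in_rev[OF xs(1) edge_sym]] show ?thesis
      by (simp add: hd_rev last_rev)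
  qed
  then show ?thesis using assms by (simp add: le_antisym)
qed

lemma gdist_triangle:
  assumes "u \<in> V" "v \<in> V" "w \<in> V"
  shows "gdist V E u w \<le> gdist V E u v + gdist V E v w"
proof -
  obtain xs where xs: "walk_in V E xs" "hd xs = u" "last xs = v" "length xs = Suc (gdist V E u v)"
    using shortest_walk assms by blast
  obtain ys where ys: "walk_in V E ys" "hd ys = v" "last ys = w" "length ys = Suc (gdist V E v w)"
    using shortest_walk assms by blast
  have "xs \<noteq> []" "ys \<noteq> []" using xs ys unfolding walk_in_def by auto
  with xs ys gdist_le_walk[OF walk_in_append[OF xs(1) ys(1)]] show ?thesis
    by (simp add: hd_last_append_tl)
qed

lemma gdist_edge_le:
  assumes "c \<in> V" "E u v"
  shows "gdist V E c v \<le> gdist V E c u + 1"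
proof -
  have uv: "u \<in> V" "v \<in> V" using simple assms(2) unfolding simple_graph_def by blast+
  have "gdist V E u v \<le> 1"
    using gdist_le_walk[of V E "[u, v]"] assms(2) uv unfolding walk_in_def by (auto simp: less_Suc_eq)
  then show ?thesis using gdist_triangle[OF assms(1) uv] by linarith
qed

lemma gdist_le_diameter: "u \<in> V \<Longrightarrow> v \<in> V \<Longrightarrow> gdist V E u v \<le> diameter V E"
  unfolding diameter_def
  by (rule Max_ge) (use finite_vertices in \<open>auto simp: finite_image_set2\<close>)

lemma shortest_walk_nth:
  assumes "walk_in V E xs" "length xs = Suc (gdist V E (hd xs) (last xs))" "q < length xs"
  shows "gdist V E (hd xs) (xs ! q) = q" "gdist V E (xs ! q) (last xs) = length xs - 1 - q"
proof -
  have ne: "xs \<noteq> []" using assms(1) unfolding walk_in_def by auto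
  have V: "hd xs \<in> V" "last xs \<in> V" "xs ! q \<in> V"
    using assms(1,3) ne unfolding walk_in_def by auto
  have "last (take (Suc q) xs) = xs ! q"
    using assms(3) by (simp add: take_Suc_conv_app_nth)
  then have "gdist V E (hd xs) (xs ! q) \<le> q"
    using gdist_le_walk[OF walk_in_take[OF assms(1), of q]] ne assms(3) by simp
  moreover have "gdist V E (xs ! q) (last xs) \<le> length xs - 1 - q"
    using gdist_le_walk[of V E "drop q xs"] assms(1,3) ne
    by (auto simp: walk_in_def hd_drop_conv_nth dest: in_set_dropD)
  ultimately show "gdist V E (hd xs) (xs ! q) = q" "gdist V E (xs ! q) (last xs) = length xs - 1 - q"
    using gdist_triangle[OF V(1,3,2)] assms(2,3) by linarith+
qed

lemma shortest_walk_between: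
  assumes "walk_in V E xs" "length xs = Suc (gdist V E (hd xs) (last xs))" "z \<in> set xs"
  shows "gdist V E (hd xs) z + gdist V E z (last xs) = gdist V E (hd xs) (last xs)"
  using assms shortest_walk_nth[OF assms(1,2)] by (auto simp: in_set_conv_nth)

lemma shortest_walk_step:
  assumes "walk_in V E xs" "length xs = Suc (gdist V E (hd xs) (last xs))" "Suc q < length xs"
  shows "gdist V E (hd xs) (xs ! Suc q) = Suc (gdist V E (hd xs) (xs ! q))"
    "gdist V E (xs ! q) (last xs) = Suc (gdist V E (xs ! Suc q) (last xs))"
  using shortest_walk_nth[OF assms(1,2)] assms(3) by auto

lemma sorted_gdist_diff_along_walk:
  assumes "walk_in V E p" "c \<in> V" "c' \<in> V"
    and "\<And>q. Suc q < length p \<Longrightarrow>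
      gdist V E c (p ! Suc q) = Suc (gdist V E c (p ! q)) \<or>
      gdist V E c' (p ! q) = Suc (gdist V E c' (p ! Suc q))"
  shows "sorted (map (\<lambda>z. int (gdist V E c z) - int (gdist V E c' z)) p)"
  unfolding sorted_iff_nth_Suc
proof (intro allI impI)
  fix q assume "Suc q < length (map (\<lambda>z. int (gdist V E c z) - int (gdist V E c' z)) p)"
  then have q: "Suc q < length p" by simp
  then have "E (p ! q) (p ! Suc q)" using assms(1) unfolding walk_in_def by blast
  then have "gdist V E c (p ! q) \<le> gdist V E c (p ! Suc q) + 1"
    "gdist V E c' (p ! Suc q) \<le> gdist V E c' (p ! q) + 1"
    using gdist_edge_le[OF assms(2)] gdist_edge_le[OF assms(3)] edge_sym by blast+
  with assms(4)[OF q]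
  have "int (gdist V E c (p ! q)) - int (gdist V E c' (p ! q))
      \<le> int (gdist V E c (p ! Suc q)) - int (gdist V E c' (p ! Suc q))"
    by linarith
  then show "map (\<lambda>z. int (gdist V E c z) - int (gdist V E c' z)) p ! q
      \<le> map (\<lambda>z. int (gdist V E c z) - int (gdist V E c' z)) p ! Suc q"
    using q by simp
qed

lemma sorted_gdist_diff_through:
  assumes al: "walk_in V E al" "hd al = c" "last al = w" "length al = Suc (gdist V E c w)"
    and be: "walk_in V E be" "hd be = w" "last be = c'" "length be = Suc (gdist V E w c')"
  shows "sorted (map (\<lambda>z. int (gdist V E c z) - int (gdist V E c' z)) (al @ tl be))"
proof -
  let ?g = "\<lambda>z. int (gdist V E c z) - int (gdist V E c' z)"
  have V: "set al \<subseteq> V" "set be \<subseteq> V" using al(1) be(1) unfolding walk_in_def by auto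
  have ne: "al \<noteq> []" "be \<noteq> []" using al(1) be(1) unfolding walk_in_def by auto
  have cw: "c \<in> V" "w \<in> V" "c' \<in> V" using V ne al(2,3) be(3) by auto
  have "sorted (map ?g al)"
    using al cw shortest_walk_step(1)[OF al(1)] by (intro sorted_gdist_diff_along_walk) auto
  moreover have "sorted (map ?g be)"
  proof (intro sorted_gdist_diff_along_walk disjI2)
    fix q assume q: "Suc q < length be"
    then have "be ! q \<in> V" "be ! Suc q \<in> V" using V by auto
    then show "gdist V E c' (be ! q) = Suc (gdist V E c' (be ! Suc q))"
      using shortest_walk_step(2)[OF be(1) _ q] be cw gdist_commute[of c'] by simp
  qed (use be cw in auto)
  then have "sorted (map ?g (tl be))" by (simp add: map_tl sorted_tl)
  moreover have "?g z \<le> ?g w" if "z \<in> set al" for z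
  proof -
    have "gdist V E c z + gdist V E z w = gdist V E c w"
      using shortest_walk_between[OF al(1) _ that] al by simp
    moreover have "gdist V E c' w \<le> gdist V E c' z + gdist V E z w"
      using gdist_triangle cw V that by blast
    ultimately show ?thesis by linarith
  qed
  moreover have "?g w \<le> ?g z" if "z \<in> set (tl be)" for z
  proof -
    have z: "z \<in> set be" using that list.set_sel(2)[OF ne(2)] by blast
    have "gdist V E w z + gdist V E z c' = gdist V E w c'"
      using shortest_walk_between[OF be(1) _ z] be by simp
    moreover have "gdist V E c w \<le> gdist V E c z + gdist V E z w"
      using gdist_triangle cw V z by blast
    moreover have "gdist V E z w = gdist V E w z" "gdist V E c' w = gdist V E w c'"
      "gdist V E c' z = gdist V E z c'"
      using gdist_commute cw V z by blast+
    ultimately show ?thesis by linarith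
  qed
  ultimately show ?thesis
    unfolding map_append sorted_append by (fastforce intro: order_trans)
qed

end

section \<open>The Sauer--Shelah bound\<close>

definition shatters :: "'b set set \<Rightarrow> 'b set \<Rightarrow> bool" where
  "shatters F Y \<longleftrightarrow> (\<forall>S\<subseteq>Y. \<exists>A\<in>F. A \<inter> Y = S)"

lemma shatters_if_shatters_image_remove:
  assumes "a \<notin> Y" "shatters ((\<lambda>A. A - {a}) ` F) Y"
  shows "shatters F Y"
  unfolding shatters_def
proof (intro allI impI)
  fix S assume "S \<subseteq> Y"
  then obtain A where "A \<in> F" "(A - {a}) \<inter> Y = S"
    using assms(2) unfolding shatters_def by blast
  then show "\<exists>A\<in>F. A \<inter> Y = S" using assms(1) by blast
qed

lemma shatters_insert_if_shatters_pairs: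
  assumes "a \<notin> Y" "shatters {A \<in> F. a \<notin> A \<and> insert a A \<in> F} Y"
  shows "shatters F (insert a Y)"
  unfolding shatters_def
proof (intro allI impI)
  fix S assume S: "S \<subseteq> insert a Y"
  then have "S - {a} \<subseteq> Y" by blast
  then obtain A where A: "A \<in> F" "a \<notin> A" "insert a A \<in> F" "A \<inter> Y = S - {a}"
    using assms(2) unfolding shatters_def by blast
  show "\<exists>B\<in>F. B \<inter> insert a Y = S"
  proof (cases "a \<in> S")
    case True
    then show ?thesis using A by (intro bexI[of _ "insert a A"]) auto
  next
    case False
    then show ?thesis using A by (intro bexI[of _ A]) auto
  qed
qed

lemma card_le_card_image_remove_add_pairs:
  assumes "finite F"
  shows "card F \<le> card ((\<lambda>A. A - {a}) ` F) + card {A \<in> F. a \<notin> A \<and> insert a A \<in> F}"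
proof -
  let ?g = "\<lambda>A. A - {a}"
  define Fout where "Fout = {A \<in> F. a \<notin> A}"
  define Fin where "Fin = {A \<in> F. a \<in> A}"
  have "F = Fout \<union> Fin" "Fout \<inter> Fin = {}" by (auto simp: Fout_def Fin_def)
  with assms have "card F = card Fout + card Fin" by (metis card_Un_disjoint finite_Un)
  also have "card Fin = card (?g ` Fin)"
    by (rule card_image[symmetric]) (auto simp: inj_on_def Fin_def)
  also have "card Fout + card (?g ` Fin) = card (Fout \<union> ?g ` Fin) + card (Fout \<inter> ?g ` Fin)"
    using assms by (intro card_Un_Int) (auto simp: Fout_def Fin_def)
  also have "\<dots> \<le> card (?g ` F) + card {A \<in> F. a \<notin> A \<and> insert a A \<in> F}"
  proof (intro add_mono card_mono)
    show "Fout \<union> ?g ` Fin \<subseteq> ?g ` F" by (auto simp: Fout_def Fin_def)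
    show "Fout \<inter> ?g ` Fin \<subseteq> {A \<in> F. a \<notin> A \<and> insert a A \<in> F}"
      by (auto simp: Fout_def Fin_def insert_absorb)
  qed (use assms in auto)
  finally show ?thesis by simp
qed

lemma power_add_power_pred_le:
  "(n + 1) ^ D + (if D = 0 then 0 else (n + 1) ^ (D - 1)) \<le> (n + 2 :: nat) ^ D"
proof (cases D)
  case (Suc D')
  have "(n + 1) ^ D + (n + 1) ^ D' = (n + 2) * (n + 1) ^ D'"
    using Suc by simp
  also have "\<dots> \<le> (n + 2) * (n + 2) ^ D'"
    by (intro mult_left_mono power_mono) auto
  finally show ?thesis using Suc by simp
qed simp

theorem sauer_shelah_bound:
  assumes "finite X" "F \<subseteq> Pow X" "\<And>Y. Y \<subseteq> X \<Longrightarrow> card Y = Suc D \<Longrightarrow> \<not> shatters F Y"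
  shows "card F \<le> (card X + 1) ^ D"
  using assms
proof (induction X arbitrary: F D rule: finite_induct)
  case empty
  then have "F \<subseteq> {{}}" by auto
  then show ?case using card_mono[of "{{}}" F] by simp
next
  case (insert a X)
  let ?F0 = "(\<lambda>A. A - {a}) ` F" and ?F1 = "{A \<in> F. a \<notin> A \<and> insert a A \<in> F}"
  have "finite F"
    using insert.hyps(1) insert.prems(1) by (meson finite_Pow_iff finite_insert finite_subset)
  have sub: "?F0 \<subseteq> Pow X" "?F1 \<subseteq> Pow X"
    using insert.prems(1) by (fastforce simp: subset_insert_iff)+
  have not_sh0: "\<not> shatters ?F0 Y" if "Y \<subseteq> X" "card Y = Suc D" for Y
  proof
    assume sh: "shatters ?F0 Y"
    have "a \<notin> Y" using insert.hyps(2) that(1) by blast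
    then have "shatters F Y" using sh by (rule shatters_if_shatters_image_remove)
    then show False using insert.prems(2) that by blast
  qed
  have not_sh1: "\<not> shatters ?F1 Y" if "Y \<subseteq> X" "card Y = D" for Y
  proof
    assume sh: "shatters ?F1 Y"
    have "a \<notin> Y" using insert.hyps(2) that(1) by blast
    then have "shatters F (insert a Y)" using sh by (rule shatters_insert_if_shatters_pairs)
    moreover have "card (insert a Y) = Suc D"
      using that insert.hyps finite_subset[OF that(1)] by (subst card_insert_disjoint) auto
    ultimately show False using insert.prems(2) that(1) by blast
  qed
  have "card F \<le> card ?F0 + card ?F1"
    using \<open>finite F\<close> by (rule card_le_card_image_remove_add_pairs)
  also have "\<dots> \<le> (card X + 1) ^ D + (if D = 0 then 0 else (card X + 1) ^ (D - 1))"
  proof (intro add_mono)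
    show "card ?F0 \<le> (card X + 1) ^ D" using insert.IH[OF sub(1) not_sh0] .
    show "card ?F1 \<le> (if D = 0 then 0 else (card X + 1) ^ (D - 1))"
    proof (cases D)
      case 0
      then have "?F1 = {}" using not_sh1[of "{}"] unfolding shatters_def by auto
      then show ?thesis by (simp only: card.empty)
    next
      case (Suc D')
      then show ?thesis using insert.IH[OF sub(2), of D'] not_sh1 by simp
    qed
  qed
  also have "\<dots> \<le> (card (insert a X) + 1) ^ D"
    using power_add_power_pred_le[of "card X" D] insert.hyps by simp
  finally show ?case .
qed

section \<open>Separated balls force a complete minor\<close>

definition first_argmax :: "nat \<Rightarrow> (nat \<Rightarrow> 'b::linorder) \<Rightarrow> nat" where
  "first_argmax t f = (LEAST l. l < t \<and> (\<forall>m<t. f m \<le> f l))"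

lemma first_argmax_eqI:
  assumes "l < t" "\<And>m. m < t \<Longrightarrow> f m \<le> f l" "\<And>m. m < l \<Longrightarrow> f m < f l"
  shows "first_argmax t f = l"
  unfolding first_argmax_def
proof (rule Least_equality)
  show "l < t \<and> (\<forall>m<t. f m \<le> f l)" using assms(1,2) by blast
  show "l \<le> l'" if "l' < t \<and> (\<forall>m<t. f m \<le> f l')" for l'
    using that assms(1) assms(3)[of l'] by force
qed

lemma first_argmax_of_two:
  assumes "i < t" "j < t" "i \<noteq> j" "\<And>l. l < t \<Longrightarrow> l \<noteq> i \<Longrightarrow> l \<noteq> j \<Longrightarrow> f l < max (f i) (f j)"
  shows "first_argmax t f = (if f j < f i \<or> f i = f j \<and> i < j then i else j)"
proof -
  have less_i: "f m < f i"
    if "f j < f i \<or> f i = f j \<and> i < j" "m < t" "m \<noteq> i" "m \<noteq> j \<or> m < i" for m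
    using that assms(4)[of m] by (cases "m = j") (auto simp: max_def split: if_splits)
  have less_j: "f m < f j"
    if "\<not> (f j < f i \<or> f i = f j \<and> i < j)" "m < t" "m \<noteq> j" "m \<noteq> i \<or> m < j" for m
    using that assms(3) assms(4)[of m] by (cases "m = i") (auto simp: max_def split: if_splits)
  show ?thesis
  proof (cases "f j < f i \<or> f i = f j \<and> i < j")
    case True
    then have "first_argmax t f = i"
      using assms(1) less_i[OF True] by (intro first_argmax_eqI) (force intro: less_imp_le)+
    then show ?thesis using True by simp
  next
    case False
    then have "first_argmax t f = j"
      using assms(2) less_j[OF False] by (intro first_argmax_eqI) (force intro: less_imp_le)+
    then show ?thesis using False by simp
  qed
qed

locale separated_balls = connected_graph +
  fixes t :: nat and x :: "nat \<Rightarrow> 'a" and r :: "nat \<Rightarrow> nat"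
  assumes center_in: "i < t \<Longrightarrow> x i \<in> V"
    and separated: "i < t \<Longrightarrow> j < t \<Longrightarrow> \<exists>w\<in>V. \<forall>l<t. gdist V E (x l) w \<le> r l \<longleftrightarrow> l = i \<or> l = j"
begin

definition slack :: "nat \<Rightarrow> 'a \<Rightarrow> int" where
  "slack l z = int (r l) - int (gdist V E (x l) z)"

definition owner :: "'a \<Rightarrow> nat" where
  "owner z = first_argmax t (\<lambda>l. slack l z)"

definition link_walk :: "nat \<Rightarrow> nat \<Rightarrow> 'a list \<Rightarrow> bool" where
  "link_walk i j p \<longleftrightarrow> i < t \<and> j < t \<and> i \<noteq> j \<and>
     walk_in V E p \<and> hd p = x i \<and> last p = x j \<and>
     (\<forall>z\<in>set p. \<forall>l<t. l \<noteq> i \<longrightarrow> l \<noteq> j \<longrightarrow> slack l z < max (slack i z) (slack j z)) \<and>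
     sorted (map (\<lambda>z. slack j z - slack i z) p)"

text \<open>The centres are listed separately only for the sake of \<open>t = 1\<close>, where there are no link walks.\<close>

definition branch_set :: "nat \<Rightarrow> 'a set" where
  "branch_set i = {z. owner z = i \<and> (z \<in> x ` {..<t} \<or> (\<exists>j k p. link_walk j k p \<and> z \<in> set p))}"

lemma slack_less_if_near:
  assumes "l < t" "z \<in> V" "w \<in> V"
    and "gdist V E (x i) z + gdist V E z w \<le> r i" "r l < gdist V E (x l) w"
  shows "slack l z < slack i z"
proof -
  have "gdist V E (x l) w \<le> gdist V E (x l) z + gdist V E z w"
    using gdist_triangle center_in assms(1-3) by blast
  then show ?thesis using assms(4,5) unfolding slack_def by linarith
qed

lemma owner_center:
  assumes "i < t"
  shows "owner (x i) = i"
proof -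
  obtain w where w: "w \<in> V" "\<forall>l<t. gdist V E (x l) w \<le> r l \<longleftrightarrow> l = i"
    using separated[OF assms assms] by auto
  have "slack m (x i) < slack i (x i)" if "m < t" "m \<noteq> i" for m
    using that w assms center_in gdist_self by (intro slack_less_if_near[of _ _ w]) (auto simp: not_le)
  then show ?thesis
    unfolding owner_def using assms by (intro first_argmax_eqI) (force intro: less_imp_le)+
qed

lemma slack_less_on_shortest_walk:
  assumes "l < t" "i < t" "w \<in> V" "gdist V E (x i) w \<le> r i" "r l < gdist V E (x l) w"
    and "walk_in V E p" "length p = Suc (gdist V E (hd p) (last p))" "{hd p, last p} = {x i, w}"
    and "z \<in> set p"
  shows "slack l z < slack i z"
proof -
  have V: "x i \<in> V" "z \<in> V" using center_in assms(2,6,9) unfolding walk_in_def by auto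
  have "gdist V E (hd p) z + gdist V E z (last p) = gdist V E (hd p) (last p)"
    using shortest_walk_between[OF assms(6,7,9)] .
  then have "gdist V E (x i) z + gdist V E z w = gdist V E (x i) w"
    using assms(8) gdist_commute V assms(3) by (auto simp: doubleton_eq_iff)
  then show ?thesis using slack_less_if_near[OF assms(1) V(2) assms(3) _ assms(5)] assms(4) by simp
qed

lemma link_walk_exists:
  assumes "i < t" "j < t" "i \<noteq> j"
  obtains p where "link_walk i j p"
proof -
  obtain w where w: "w \<in> V" "\<forall>l<t. gdist V E (x l) w \<le> r l \<longleftrightarrow> l = i \<or> l = j"
    using separated[OF assms(1,2)] by blast
  have x: "x i \<in> V" "x j \<in> V" using center_in assms by auto
  obtain al where al: "walk_in V E al" "hd al = x i" "last al = w" "length al = Suc (gdist V E (x i) w)"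
    using shortest_walk[OF x(1) w(1)] .
  obtain be where be: "walk_in V E be" "hd be = w" "last be = x j" "length be = Suc (gdist V E w (x j))"
    using shortest_walk[OF w(1) x(2)] .
  have ne: "al \<noteq> []" "be \<noteq> []" using al(1) be(1) unfolding walk_in_def by auto
  let ?p = "al @ tl be"
  have "walk_in V E ?p" "hd ?p = x i" "last ?p = x j"
    using walk_in_append[OF al(1) be(1)] hd_last_append_tl[OF ne] al be by simp_all
  moreover have "slack l z < max (slack i z) (slack j z)"
    if z: "z \<in> set ?p" and l: "l < t" "l \<noteq> i" "l \<noteq> j" for z l
  proof -
    have far: "r l < gdist V E (x l) w" using w(2) l by (auto simp: not_le)
    have near: "gdist V E (x i) w \<le> r i" "gdist V E (x j) w \<le> r j" using w(2) assms by auto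
    consider "z \<in> set al" | "z \<in> set be" using z list.set_sel(2)[OF ne(2)] by auto
    then show ?thesis
    proof cases
      case 1
      have "slack l z < slack i z"
        using slack_less_on_shortest_walk[OF l(1) assms(1) w(1) near(1) far al(1) _ _ 1] al by auto
      then show ?thesis by simp
    next
      case 2
      have "slack l z < slack j z"
        using slack_less_on_shortest_walk[OF l(1) assms(2) w(1) near(2) far be(1) _ _ 2] be by auto
      then show ?thesis by simp
    qed
  qed
  moreover have "sorted (map (\<lambda>z. slack j z - slack i z) ?p)"
  proof -
    have "sorted (map (\<lambda>z. int (gdist V E (x i) z) - int (gdist V E (x j) z)) ?p)"
      using sorted_gdist_diff_through[OF al be] .
    then show ?thesis
      unfolding sorted_map by (rule sorted_wrt_mono_rel[rotated]) (simp add: slack_def)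
  qed
  ultimately show ?thesis using that assms unfolding link_walk_def by blast
qed

lemma link_walk_rev: "link_walk i j p \<Longrightarrow> link_walk j i (rev p)"
  unfolding link_walk_def
  by (auto simp: walk_in_rev edge_sym hd_rev last_rev sorted_map sorted_wrt_rev max.commute
      elim: sorted_wrt_mono_rel[rotated])

lemma owner_on_link_walk:
  assumes "link_walk i j p" "z \<in> set p"
  shows "owner z = (if slack j z < slack i z \<or> slack i z = slack j z \<and> i < j then i else j)"
  using assms unfolding owner_def link_walk_def by (intro first_argmax_of_two) auto

lemma owner_link_walk_prefix:
  assumes "link_walk i j p" "q \<le> q'" "q' < length p" "owner (p ! q') = i"
  shows "owner (p ! q) = i"
proof -
  have "slack j (p ! q) - slack i (p ! q) \<le> slack j (p ! q') - slack i (p ! q')"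
    using sorted_nth_mono[of "map (\<lambda>z. slack j z - slack i z) p" q q'] assms(1-3)
    unfolding link_walk_def by simp
  moreover have "i \<noteq> j" using assms(1) unfolding link_walk_def by blast
  ultimately show ?thesis
    using owner_on_link_walk[OF assms(1)] assms(2-4) by (auto split: if_splits)
qed

lemma walk_in_branch_set_to_owned:
  assumes "link_walk i j p" "z \<in> set p" "owner z = i"
  obtains xs where "walk_in (branch_set i) E xs" "hd xs = x i" "last xs = z"
proof -
  obtain q where q: "q < length p" "z = p ! q" using assms(2) by (auto simp: in_set_conv_nth)
  have p: "walk_in V E p" "hd p = x i" using assms(1) unfolding link_walk_def by blast+
  then have "p \<noteq> []" unfolding walk_in_def by blast
  let ?xs = "take (Suc q) p"
  have "set ?xs \<subseteq> branch_set i"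
  proof
    fix y assume "y \<in> set ?xs"
    then obtain q' where "q' \<le> q" "y = p ! q'"
      by (metis in_set_conv_nth length_take less_Suc_eq_le min_less_iff_conj nth_take)
    moreover have "p ! q' \<in> set p" using \<open>q' \<le> q\<close> q(1) by simp
    ultimately show "y \<in> branch_set i"
      using owner_link_walk_prefix[OF assms(1) _ q(1)] q(2) assms(1,3) unfolding branch_set_def by blast
  qed
  moreover have "hd ?xs = x i" using p \<open>p \<noteq> []\<close> by simp
  moreover have "last ?xs = z" using q by (simp add: take_Suc_conv_app_nth)
  ultimately show ?thesis
    using that walk_in_mono[OF walk_in_take[OF p(1)]] by blast
qed

lemma connected_branch_set:
  assumes "i < t"
  shows "connected_in (branch_set i) E"
proof (rule connected_in_if_walks_from[of "x i"])
  show "x i \<in> branch_set i" using owner_center assms unfolding branch_set_def by auto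
  show "\<exists>xs. walk_in (branch_set i) E xs \<and> hd xs = x i \<and> last xs = z" if z: "z \<in> branch_set i" for z
  proof (cases "z \<in> x ` {..<t}")
    case True
    then have "z = x i" using z owner_center unfolding branch_set_def by auto
    then show ?thesis using z by (intro exI[of _ "[z]"]) (auto simp: walk_in_def)
  next
    case False
    then obtain j k p where p: "link_walk j k p" "z \<in> set p" "owner z = i"
      using z unfolding branch_set_def by blast
    then have "link_walk i k p \<or> link_walk i j (rev p)"
      using owner_on_link_walk link_walk_rev by (auto split: if_splits)
    then show ?thesis
      using walk_in_branch_set_to_owned p(2,3) by (metis set_rev)
  qed
qed (fact edge_sym)

lemma branch_sets_adjacent:
  assumes "i < t" "j < t" "i \<noteq> j"
  shows "\<exists>y\<in>branch_set i. \<exists>y'\<in>branch_set j. E y y'"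
proof -
  obtain p where p: "link_walk i j p" using link_walk_exists[OF assms] .
  then have walk: "walk_in V E p" "hd p = x i" "last p = x j" unfolding link_walk_def by blast+
  then have "p \<noteq> []" unfolding walk_in_def by blast
  then obtain q where q: "Suc q < length p" "owner (p ! q) = i" "owner (p ! Suc q) \<noteq> i"
    using exists_nth_switch[of p "\<lambda>z. owner z = i"] walk owner_center assms by auto
  have "owner (p ! Suc q) = j"
    using q owner_on_link_walk[OF p nth_mem[OF q(1)]] by (auto split: if_splits)
  moreover have "E (p ! q) (p ! Suc q)" using walk(1) q(1) unfolding walk_in_def by blast
  ultimately show ?thesis
    using q p unfolding branch_set_def by (metis (mono_tags, lifting) Suc_lessD mem_Collect_eq nth_mem)
qed

theorem complete_minor: "has_complete_minor V E t"
  unfolding has_complete_minor_def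
proof (intro exI[of _ branch_set] conjI allI impI)
  fix i assume i: "i < t"
  show "branch_set i \<noteq> {}" using owner_center i unfolding branch_set_def by auto
  show "branch_set i \<subseteq> V"
    using center_in unfolding branch_set_def link_walk_def walk_in_def by auto
  show "connected_in (branch_set i) E" using connected_branch_set[OF i] .
next
  fix i j assume "i < t" "j < t" "i \<noteq> j"
  then show "branch_set i \<inter> branch_set j = {}" "\<exists>y\<in>branch_set i. \<exists>y'\<in>branch_set j. E y y'"
    using branch_sets_adjacent unfolding branch_set_def by auto
qed

end

section \<open>The bound on the order\<close>

context connected_graph
begin

text \<open>A pair \<open>(c, \<rho>)\<close> stands for the ball of radius \<open>\<rho>\<close> around \<open>c\<close>.\<close>

definition balls_containing :: "('a \<times> nat) set \<Rightarrow> 'a \<Rightarrow> ('a \<times> nat) set" where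
  "balls_containing X w = {(c, \<rho>) \<in> X. gdist V E c w \<le> \<rho>}"

lemma inj_on_balls_containing:
  assumes "resolving_set V E R"
  shows "inj_on (balls_containing (R \<times> {..<diameter V E})) V"
proof (rule inj_onI, rule ccontr)
  fix u v assume uv: "u \<in> V" "v \<in> V" and eq: "balls_containing (R \<times> {..<diameter V E}) u
    = balls_containing (R \<times> {..<diameter V E}) v" and "u \<noteq> v"
  then obtain c where c: "c \<in> R" "gdist V E c u \<noteq> gdist V E c v"
    using assms unfolding resolving_set_def by blast
  have "c \<in> V" using c(1) assms unfolding resolving_set_def by blast
  have "(c, min (gdist V E c u) (gdist V E c v)) \<in> balls_containing (R \<times> {..<diameter V E}) u
    \<longleftrightarrow> gdist V E c u \<le> gdist V E c v"
    "(c, min (gdist V E c u) (gdist V E c v)) \<in> balls_containing (R \<times> {..<diameter V E}) v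
    \<longleftrightarrow> gdist V E c v \<le> gdist V E c u"
    using c gdist_le_diameter[OF \<open>c \<in> V\<close> uv(1)] gdist_le_diameter[OF \<open>c \<in> V\<close> uv(2)]
    unfolding balls_containing_def by (auto simp: min_def)
  then show False using eq c(2) by auto
qed

lemma complete_minor_if_shatters_balls:
  assumes "finite Y" "Y \<subseteq> X" "X \<subseteq> V \<times> UNIV" "shatters (balls_containing X ` V) Y"
  shows "has_complete_minor V E (card Y)"
proof -
  obtain f where f: "bij_betw f {..<card Y} Y"
    using ex_bij_betw_nat_finite[OF assms(1)] by (auto simp: atLeast0LessThan)
  define x where "x = fst \<circ> f"
  define r where "r = snd \<circ> f"
  interpret separated_balls V E "card Y" x r
  proof unfold_locales
    fix i j assume ij: "i < card Y" "j < card Y"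
    show "x i \<in> V" using ij(1) f assms(2,3) unfolding x_def bij_betw_def by force
    have "f ` {i, j} \<subseteq> Y" using ij f unfolding bij_betw_def by auto
    then obtain w where w: "w \<in> V" "balls_containing X w \<inter> Y = f ` {i, j}"
      using assms(4) unfolding shatters_def by blast
    have "gdist V E (x l) w \<le> r l \<longleftrightarrow> l = i \<or> l = j" if "l < card Y" for l
    proof -
      have "f l \<in> Y" using that f unfolding bij_betw_def by auto
      then have "gdist V E (x l) w \<le> r l \<longleftrightarrow> f l \<in> balls_containing X w \<inter> Y"
        using assms(2) unfolding balls_containing_def x_def r_def by (cases "f l") auto
      also have "\<dots> \<longleftrightarrow> l = i \<or> l = j"
        using w(2) that ij f unfolding bij_betw_def inj_on_def by auto
      finally show ?thesis .
    qed
    then show "\<exists>w\<in>V. \<forall>l<card Y. gdist V E (x l) w \<le> r l \<longleftrightarrow> l = i \<or> l = j"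
      using w(1) by blast
  qed
  show ?thesis by (rule complete_minor)
qed

end

theorem theorem5:
  fixes V :: "'a set" and E :: "'a \<Rightarrow> 'a \<Rightarrow> bool" and R :: "'a set" and t d k n :: nat
  assumes "simple_graph V E"
    and "V \<noteq> {}"
    and "connected_in V E"
    and "\<not> has_complete_minor V E t"
    and "diameter V E = d"
    and "card V = n"
    and "resolving_set V E R"
    and "card R = k"
  shows "n \<le> (d * k + 1) ^ (t - 1) + 1"
proof -
  interpret connected_graph V E using assms(1,3) by unfold_locales
  define X where "X = R \<times> {..<d}"
  have "R \<subseteq> V" using assms(7) unfolding resolving_set_def by blast
  then have X: "finite X" "X \<subseteq> V \<times> UNIV" "card X = d * k"
    using finite_vertices assms(8) finite_subset unfolding X_def by (auto simp: card_cartesian_product)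
  have "t \<noteq> 0" using assms(4) unfolding has_complete_minor_def by auto
  have "\<not> shatters (balls_containing X ` V) Y" if "Y \<subseteq> X" "card Y = Suc (t - 1)" for Y
    using complete_minor_if_shatters_balls[of Y X] that X assms(4) \<open>t \<noteq> 0\<close> finite_subset by auto
  then have "card (balls_containing X ` V) \<le> (card X + 1) ^ (t - 1)"
    using X by (intro sauer_shelah_bound) (auto simp: balls_containing_def)
  moreover have "card (balls_containing X ` V) = n"
    using card_image[OF inj_on_balls_containing[OF assms(7)]] assms(5,6) X_def by simp
  ultimately show ?thesis using X(3) by (simp add: mult.commute)
qed

end
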